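(* Let $0<q<1$, $N$ a positive integer, $n\in\{0,1,\dots,N\}$, and $\gamma\in\mathbb{C}$ with $\gamma q,\gamma q^2\notin\{q^{-j}:j\in\mathbb{Z}_{\ge0}\}$. Then $${}_4\phi_3\!\left(\begin{matrix}q^{-2n},q^{-2(N-n)-1},q^{-x},-\gamma q^{x+1}\\ q^{-N},-q^{-N},\gamma q\end{matrix};q,q\right)={}_4\phi_3\!\left(\begin{matrix}q^{-2n},q^{2n-2N-1},q^{-2x},\gamma^2q^{2x+2}\\ q^{-2N},\gamma q,\gamma q^2\end{matrix};q^2,q^2\right)$$ holds for all $x\in\mathbb{C}$ if $2n\le N$, and holds for $x\in\{0,1,\dots,N\}$ if $2n>N$.
   Context: $(x;q)_k=\prod_{j=0}^{k-1}(1-xq^j)$. A terminating ${}_4\phi_3\!\left(\begin{matrix}a_1,\dots,a_4\\ b_1,b_2,b_3\end{matrix};p,p\right)$ (base $p$, here $p=q$ or $p=q^2$) means $\sum_{k=0}^K\frac{(a_1,\dots,a_4;p)_k}{(b_1,b_2,b_3,p;p)_k}p^k$, where $K$ is the smallest nonnegative integer such that some numerator parameter $a_i$ equals $p^{-K}$ (the sum is truncated at the first numerator parameter that causes termination). *)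

theory Defs
  imports Complex_Main
begin

definition qpoch :: "complex \<Rightarrow> complex \<Rightarrow> nat \<Rightarrow> complex" where
  "qpoch x p k = (\<Prod>j<k. (1 - x * p ^ j))"

definition qpow :: "real \<Rightarrow> complex \<Rightarrow> complex" where
  "qpow q z = exp (z * complex_of_real (ln q))"

definition phi43_term ::
  "complex \<Rightarrow> complex \<Rightarrow> complex \<Rightarrow> complex \<Rightarrow> complex \<Rightarrow> complex \<Rightarrow> complex
   \<Rightarrow> complex \<Rightarrow> complex" where
  "phi43_term a1 a2 a3 a4 b1 b2 b3 p =
    (let K = (LEAST K::nat. a1 = inverse (p ^ K) \<or> a2 = inverse (p ^ K)
                          \<or> a3 = inverse (p ^ K) \<or> a4 = inverse (p ^ K))
     in \<Sum>k\<le>K. (qpoch a1 p k * qpoch a2 p k * qpoch a3 p k * qpoch a4 p k)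
               / (qpoch b1 p k * qpoch b2 p k * qpoch b3 p k * qpoch p p k) * p ^ k)"

end

theory Submission
  imports Defs "HOL-Computational_Algebra.Polynomial"
begin

text \<open>
  Both series are balanced and terminating, hence eigenfunctions of second-order q-difference
  operators of Askey--Wilson type: the left one in the variable z = q^-x with base q, the right
  one in z^2 with base q^2. The substitution v \<mapsto> v^2 carries the second operator into the
  first, and the two eigenvalues agree. At the points z = q^-x, x = 0..N, the eigenvalue equation
  is a recurrence whose leading coefficient does not vanish for nonreal \<gamma>; as both series
  equal 1 at z = 1, they agree at these points. If 2n \<le> N, both are polynomials of degree at
  most N in z - \<gamma>q/z, so they agree identically. Finally, multiplied by (\<gamma>q;q)_2N both
  sides become polynomials in \<gamma>, so the identity extends from nonreal \<gamma> to every
  admissible \<gamma>.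
\<close>

section \<open>q-shifted factorials and terminating series\<close>

lemma qpoch_0 [simp]: "qpoch x p 0 = 1"
  by (simp add: qpoch_def)

lemma qpoch_Suc: "qpoch x p (Suc k) = qpoch x p k * (1 - x * p ^ k)"
  by (simp add: qpoch_def)

lemma qpoch_Suc_left: "qpoch x p (Suc k) = (1 - x) * qpoch (x * p) p k"
  unfolding qpoch_def by (simp add: prod.lessThan_Suc_shift mult.assoc del: prod.lessThan_Suc)

lemma qpoch_add: "qpoch x p (a + b) = qpoch x p a * qpoch (x * p ^ a) p b"
  by (induction b) (simp_all add: qpoch_Suc power_add algebra_simps)

lemma qpoch_base_square: "qpoch x (p ^ 2) k * qpoch (x * p) (p ^ 2) k = qpoch x p (2 * k)"
proof (induction k)
  case (Suc k)
  have "(p ^ 2) ^ k = p ^ (2 * k)" by (simp add: power_mult)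
  then show ?case by (simp add: qpoch_Suc flip: Suc.IH)
qed simp

lemma qpoch_inverse_power_eq_0:
  assumes "p \<noteq> 0" "K < k"
  shows "qpoch (inverse (p ^ K)) p k = 0"
  unfolding qpoch_def using assms by (intro prod_zero bexI[of _ K]) auto

lemma qpoch_nonzero: "(\<And>j. j < k \<Longrightarrow> 1 - x * p ^ j \<noteq> 0) \<Longrightarrow> qpoch x p k \<noteq> 0"
  unfolding qpoch_def by (simp add: prod_zero_iff)

lemma qpoch_nonzero_le: "qpoch x p m \<noteq> 0 \<Longrightarrow> k \<le> m \<Longrightarrow> qpoch x p k \<noteq> 0"
  using qpoch_add[of x p k "m - k"] by auto

lemma phi43_term_eq_sum:
  assumes p: "p \<noteq> 0"
    and K: "a1 = inverse (p ^ K) \<or> a2 = inverse (p ^ K) \<or> a3 = inverse (p ^ K) \<or> a4 = inverse (p ^ K)"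
    and KM: "K \<le> M"
  shows "phi43_term a1 a2 a3 a4 b1 b2 b3 p
    = (\<Sum>k\<le>M. (qpoch a1 p k * qpoch a2 p k * qpoch a3 p k * qpoch a4 p k)
               / (qpoch b1 p k * qpoch b2 p k * qpoch b3 p k * qpoch p p k) * p ^ k)"
proof -
  define P where "P K \<longleftrightarrow> a1 = inverse (p ^ K) \<or> a2 = inverse (p ^ K) \<or> a3 = inverse (p ^ K) \<or> a4 = inverse (p ^ K)" for K
  define K0 where "K0 = (LEAST K. P K)"
  have "P K" using K by (simp add: P_def)
  then have "P K0" "K0 \<le> K"
    unfolding K0_def by (auto intro: LeastI Least_le)
  then show ?thesis
    unfolding phi43_term_def Let_def P_def[symmetric] K0_def[symmetric]
    using KM qpoch_inverse_power_eq_0[OF p]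
    by (intro sum.mono_neutral_left) (auto simp: P_def)
qed

lemma qpow_add: "qpow q (a + b) = qpow q a * qpow q b"
  unfolding qpow_def by (simp add: distrib_right exp_add)

lemma qpow_of_nat: "0 < q \<Longrightarrow> qpow q (of_nat m) = complex_of_real q ^ m"
  unfolding qpow_def by (simp add: exp_of_nat_mult exp_of_real)

lemma qpow_nonzero: "qpow q a \<noteq> 0"
  unfolding qpow_def by simp

lemma qpow_minus: "qpow q (- a) = inverse (qpow q a)"
  unfolding qpow_def by (simp add: exp_minus)

lemma qpow_plus_1:
  assumes "0 < q"
  shows "qpow q (x + 1) = complex_of_real q / qpow q (- x)"
proof -
  have "qpow q 1 = complex_of_real q"
    using qpow_of_nat[OF assms, of 1] by simp
  then show ?thesis
    by (simp only: qpow_add qpow_minus divide_inverse inverse_inverse_eq mult.commute)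
qed

lemma qpow_double: "qpow q (2 * x) = qpow q x ^ 2"
proof -
  have "2 * x = x + x" by simp
  then show ?thesis by (simp only: qpow_add power2_eq_square)
qed

section \<open>An Askey--Wilson type q-difference operator\<close>

definition aw_basis :: "complex \<Rightarrow> complex \<Rightarrow> nat \<Rightarrow> complex \<Rightarrow> complex" where
  "aw_basis p c k u = qpoch u p k * qpoch (c / u) p k"

text \<open>
  The operator aw_op acts triangularly on the basis aw_basis (aw_op_basis), so that balanced
  terminating 4phi3 series in u + c/u are its eigenfunctions (aw_op_phi43_series).
\<close>

definition aw_up :: "complex \<Rightarrow> complex \<Rightarrow> complex \<Rightarrow> complex \<Rightarrow> complex \<Rightarrow> complex \<Rightarrow> complex" where
  "aw_up p c b1 b2 b3 u = (u - b1) * (u - b2) * (u - b3) * (u - c) / ((u^2 - c) * (u^2 - c*p))"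

definition aw_down :: "complex \<Rightarrow> complex \<Rightarrow> complex \<Rightarrow> complex \<Rightarrow> complex \<Rightarrow> complex \<Rightarrow> complex" where
  "aw_down p c b1 b2 b3 u = (u - 1) * (b1*u - c) * (b2*u - c) * (b3*u - c) / (c * (p*u^2 - c) * (u^2 - c))"

definition aw_op ::
  "complex \<Rightarrow> complex \<Rightarrow> complex \<Rightarrow> complex \<Rightarrow> complex \<Rightarrow> (complex \<Rightarrow> complex) \<Rightarrow> complex \<Rightarrow> complex" where
  "aw_op p c b1 b2 b3 f u =
     aw_up p c b1 b2 b3 u * (f (u/p) - f u) + aw_down p c b1 b2 b3 u * (f (p*u) - f u)"

definition aw_eigenvalue :: "complex \<Rightarrow> complex \<Rightarrow> complex \<Rightarrow> complex \<Rightarrow> complex \<Rightarrow> nat \<Rightarrow> complex" where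
  "aw_eigenvalue p c b1 b2 b3 k = (inverse (p^k) - 1) * (1 - b1*b2*b3/(p*c) * p^k)"

definition aw_lowering :: "complex \<Rightarrow> complex \<Rightarrow> complex \<Rightarrow> complex \<Rightarrow> nat \<Rightarrow> complex" where
  "aw_lowering p b1 b2 b3 k =
     (1 - inverse (p^k)) * (1 - b1*p^(k-1)) * (1 - b2*p^(k-1)) * (1 - b3*p^(k-1))"

lemma divide_mult_cancel_factor:
  fixes A X Y D :: "'a::field"
  assumes "Y \<noteq> 0"
  shows "A / (X * Y) * (Y / D) = A / (D * X)"
  using assms by (cases "X = 0 \<or> D = 0") (auto simp: field_simps)

lemma aw_up_factor:
  assumes "p \<noteq> 0" "u \<noteq> 0" "u^2 \<noteq> c*p"
  shows "aw_up p c b1 b2 b3 u * (c/u - u/p) = - ((u-b1)*(u-b2)*(u-b3)*(u-c)) / (p*u*(u^2-c))"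
proof -
  have "c/u - u/p = (u^2 - c*p) / (- p*u)"
    using assms by (simp add: field_simps power2_eq_square)
  then show ?thesis
    unfolding aw_up_def using assms by (simp add: divide_mult_cancel_factor)
qed

lemma aw_down_factor:
  assumes "p \<noteq> 0" "u \<noteq> 0" "p*u^2 \<noteq> c"
  shows "aw_down p c b1 b2 b3 u * (u - c/(p*u)) = (u-1)*(b1*u-c)*(b2*u-c)*(b3*u-c) / (c*p*u*(u^2-c))"
proof -
  have "u - c/(p*u) = (p*u^2 - c) / (p*u)"
    using assms by (simp add: field_simps power2_eq_square)
  then show ?thesis
    unfolding aw_down_def using assms
    by (simp add: divide_mult_cancel_factor mult.assoc mult.left_commute[of "p*u^2 - c"])
qed

text \<open>The factor u^2 - c cancels the common denominator of aw_up and aw_down.\<close>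

lemma aw_numerator_factorization:
  fixes p c u P b1 b2 b3 :: complex
  shows "- P * (c*(u-c*P)*((u-b1)*(u-b2)*(u-b3)) + (1-u*P)*((b1*u-c)*(b2*u-c)*(b3*u-c)))
    = (u^2 - c) * ((c - b1*b2*b3*P)*(1-u*P)*(u-c*P) - c*u*(1-b1*P)*(1-b2*P)*(1-b3*P))"
  by (simp add: algebra_simps power2_eq_square)

lemma aw_op_basis_identity:
  fixes p c u P b1 b2 b3 :: complex
  assumes "p \<noteq> 0" "c \<noteq> 0" "u \<noteq> 0" "P \<noteq> 0" "u^2 \<noteq> c" "u^2 \<noteq> c*p" "p*u^2 \<noteq> c"
  shows "aw_up p c b1 b2 b3 u *
       ((1-u/p)*(1-u)*(1-c*P/u)*(1-c*P*p/u) - (1-u)*(1-u*P)*(1-c/u)*(1-c*P/u))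
     + aw_down p c b1 b2 b3 u *
       ((1-u*P)*(1-u*P*p)*(1-c/(p*u))*(1-c/u) - (1-u)*(1-u*P)*(1-c/u)*(1-c*P/u))
   = (inverse (P*p) - 1)*(1 - b1*b2*b3/(p*c)*(P*p)) * ((1-u)*(1-u*P)*(1-c/u)*(1-c*P/u))
     + (1 - inverse (P*p))*(1-b1*P)*(1-b2*P)*(1-b3*P) * ((1-u)*(1-c/u))"
proof -
  have X: "(1-u/p)*(1-u)*(1-c*P/u)*(1-c*P*p/u) - (1-u)*(1-u*P)*(1-c/u)*(1-c*P/u)
      = (1-u)*(1-c*P/u)*(1-P*p)*(c/u - u/p)"
    using assms by (simp add: field_simps; simp add: algebra_simps)
  have Y: "(1-u*P)*(1-u*P*p)*(1-c/(p*u))*(1-c/u) - (1-u)*(1-u*P)*(1-c/u)*(1-c*P/u)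
      = (1-u*P)*(1-c/u)*(1-P*p)*(u - c/(p*u))"
    using assms by (simp add: field_simps; simp add: algebra_simps)
  let ?U = "aw_up p c b1 b2 b3 u" and ?D = "aw_down p c b1 b2 b3 u"
  define A where "A = (u-b1)*(u-b2)*(u-b3)"
  define B where "B = (b1*u-c)*(b2*u-c)*(b3*u-c)"
  define F where "F = (c - b1*b2*b3*P)*(1-u*P)*(u-c*P) - c*u*(1-b1*P)*(1-b2*P)*(1-b3*P)"
  define W where "W = u^2 - c"
  have "W \<noteq> 0" using assms by (simp add: W_def)
  note nonzero = this assms
  have factorization: "- P * (c*(u-c*P)*A + (1-u*P)*B) = W * F"
    unfolding A_def B_def F_def W_def by (rule aw_numerator_factorization)
  have "?U * ((1-u)*(1-c*P/u)*(1-P*p)*(c/u - u/p)) + ?D * ((1-u*P)*(1-c/u)*(1-P*p)*(u - c/(p*u)))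
      = (1-P*p) * ((1-u)*(1-c*P/u) * (?U * (c/u - u/p)) + (1-u*P)*(1-c/u) * (?D * (u - c/(p*u))))"
    by (simp only: distrib_left mult_ac)
  also have "\<dots> = (1-P*p) * ((1-u)*(1-c*P/u) * (- (A*(u-c)) / (p*u*W))
      + (1-u*P)*(1-c/u) * ((u-1)*B / (c*p*u*W)))"
    using assms by (simp add: aw_up_factor aw_down_factor A_def B_def W_def mult.assoc)
  also have "\<dots> = (1-P*p)*(1-u)*(u-c) * (- P * (c*(u-c*P)*A + (1-u*P)*B)) / (c*p*u^2*P*W)"
    using nonzero by (simp add: field_simps) algebra
  also have "\<dots> = (1-P*p)*(1-u)*(u-c) * F / (c*p*u^2*P)"
    unfolding factorization using nonzero by (simp add: field_simps)
  also have "\<dots> = (inverse (P*p) - 1)*(1 - b1*b2*b3/(p*c)*(P*p)) * ((1-u)*(1-u*P)*(1-c/u)*(1-c*P/u))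
     + (1 - inverse (P*p))*(1-b1*P)*(1-b2*P)*(1-b3*P) * ((1-u)*(1-c/u))"
    unfolding F_def using assms by (simp add: field_simps power2_eq_square; simp add: algebra_simps)
  finally show ?thesis unfolding X Y .
qed

lemma aw_op_basis_1:
  fixes p c u b1 b2 b3 :: complex
  assumes "p \<noteq> 0" "c \<noteq> 0" "u \<noteq> 0" "u^2 \<noteq> c" "u^2 \<noteq> c*p" "p*u^2 \<noteq> c"
  shows "aw_op p c b1 b2 b3 (aw_basis p c 1) u
    = aw_eigenvalue p c b1 b2 b3 1 * aw_basis p c 1 u + aw_lowering p b1 b2 b3 1"
proof -
  let ?U = "aw_up p c b1 b2 b3 u" and ?D = "aw_down p c b1 b2 b3 u"
  define A where "A = (u-b1)*(u-b2)*(u-b3)"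
  define B where "B = (b1*u-c)*(b2*u-c)*(b3*u-c)"
  define F where "F = (c - b1*b2*b3)*(1-u)*(u-c) - c*u*(1-b1)*(1-b2)*(1-b3)"
  define W where "W = u^2 - c"
  have "W \<noteq> 0" using assms by (simp add: W_def)
  note nonzero = this assms
  have factorization: "- (c*(u-c)*A + (1-u)*B) = W * F"
    using aw_numerator_factorization[of 1 c u b1 b2 b3]
    unfolding A_def B_def F_def W_def by simp
  have "(1 - u/p)*(1 - c*p/u) - (1-u)*(1-c/u) = (1-p)*(c/u - u/p)"
       "(1 - p*u)*(1 - c/(p*u)) - (1-u)*(1-c/u) = (1-p)*(u - c/(p*u))"
    using assms by (simp_all add: field_simps; simp add: algebra_simps)+
  then have "aw_op p c b1 b2 b3 (aw_basis p c 1) u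
      = (1-p) * (?U * (c/u - u/p)) + (1-p) * (?D * (u - c/(p*u)))"
    using assms by (simp add: aw_op_def aw_basis_def qpoch_def mult_ac)
  also have "\<dots> = (1-p) * (- (A*(u-c)) / (p*u*W)) + (1-p) * ((u-1)*B / (c*p*u*W))"
    using assms by (simp add: aw_up_factor aw_down_factor A_def B_def W_def mult.assoc)
  also have "\<dots> = (1-p) * (- (c*(u-c)*A + (1-u)*B)) / (c*p*u*W)"
    using nonzero by (simp add: field_simps)
  also have "\<dots> = (1-p) * F / (c*p*u)"
    unfolding factorization using nonzero by (simp add: field_simps)
  also have "\<dots> = aw_eigenvalue p c b1 b2 b3 1 * aw_basis p c 1 u + aw_lowering p b1 b2 b3 1"
    unfolding F_def aw_eigenvalue_def aw_lowering_def aw_basis_def qpoch_def using assms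
    by (simp add: field_simps; simp add: algebra_simps)
  finally show ?thesis .
qed

lemma aw_op_basis:
  fixes p c u b1 b2 b3 :: complex
  assumes "p \<noteq> 0" "c \<noteq> 0" "u \<noteq> 0" "u^2 \<noteq> c" "u^2 \<noteq> c*p" "p*u^2 \<noteq> c"
  shows "aw_op p c b1 b2 b3 (aw_basis p c k) u
    = aw_eigenvalue p c b1 b2 b3 k * aw_basis p c k u + aw_lowering p b1 b2 b3 k * aw_basis p c (k-1) u"
proof (cases k)
  case 0
  then show ?thesis by (simp add: aw_op_def aw_basis_def aw_eigenvalue_def aw_lowering_def)
next
  case (Suc j)
  show ?thesis
  proof (cases j)
    case 0
    then show ?thesis
      using aw_op_basis_1[OF assms] \<open>k = Suc j\<close> by (simp add: aw_basis_def)
  next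
    case (Suc t)
    have k: "k = Suc (Suc t)" using \<open>k = Suc j\<close> Suc by simp
    define Z where "Z = qpoch (u*p) p t"
    define V where "V = qpoch (c/u*p) p t"
    define P where "P = p^(Suc t)"
    have "P \<noteq> 0" using assms by (simp add: P_def)
    have "qpoch u p k = (1-u)*(1-u*P)*Z" "qpoch (c/u) p k = (1-c/u)*(1-c*P/u)*V"
      "qpoch (u/p) p k = (1-u/p)*(1-u)*Z" "qpoch (c/(p*u)) p k = (1-c/(p*u))*(1-c/u)*V"
      "qpoch (p*u) p k = (1-u*P)*(1-u*P*p)*Z" "qpoch (c/(u/p)) p k = (1-c*P/u)*(1-c*P*p/u)*V"
      unfolding k Z_def V_def P_def using assms
      by (subst qpoch_Suc_left, subst qpoch_Suc, simp add: field_simps,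
          subst qpoch_Suc_left, subst qpoch_Suc, simp add: field_simps,
          subst qpoch_Suc_left, subst qpoch_Suc_left, simp add: field_simps,
          subst qpoch_Suc_left, subst qpoch_Suc_left, simp add: field_simps,
          subst qpoch_Suc, subst qpoch_Suc, simp add: field_simps,
          subst qpoch_Suc, subst qpoch_Suc, simp add: field_simps)
    then have basis_u: "aw_basis p c k u = (1-u)*(1-u*P)*(1-c/u)*(1-c*P/u) * (Z*V)"
      and basis_down: "aw_basis p c k (u/p) = (1-u/p)*(1-u)*(1-c*P/u)*(1-c*P*p/u) * (Z*V)"
      and basis_up: "aw_basis p c k (p*u) = (1-u*P)*(1-u*P*p)*(1-c/(p*u))*(1-c/u) * (Z*V)"
      by (simp_all add: aw_basis_def mult_ac)
    have basis_pred: "aw_basis p c (k-1) u = (1-u)*(1-c/u) * (Z*V)"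
      unfolding aw_basis_def k Z_def V_def by (simp add: qpoch_Suc_left mult_ac)
    have "p^k = P*p" "p^(k-1) = P" unfolding k P_def by simp_all
    have "aw_op p c b1 b2 b3 (aw_basis p c k) u = (Z*V) * (aw_up p c b1 b2 b3 u *
         ((1-u/p)*(1-u)*(1-c*P/u)*(1-c*P*p/u) - (1-u)*(1-u*P)*(1-c/u)*(1-c*P/u))
       + aw_down p c b1 b2 b3 u *
         ((1-u*P)*(1-u*P*p)*(1-c/(p*u))*(1-c/u) - (1-u)*(1-u*P)*(1-c/u)*(1-c*P/u)))"
      unfolding aw_op_def basis_u basis_down basis_up by (simp add: algebra_simps)
    also have "\<dots> = (Z*V) * ((inverse (P*p) - 1)*(1 - b1*b2*b3/(p*c)*(P*p)) * ((1-u)*(1-u*P)*(1-c/u)*(1-c*P/u))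
       + (1 - inverse (P*p))*(1-b1*P)*(1-b2*P)*(1-b3*P) * ((1-u)*(1-c/u)))"
      using aw_op_basis_identity[OF assms(1-3) \<open>P \<noteq> 0\<close> assms(4-6)] by simp
    also have "\<dots> = aw_eigenvalue p c b1 b2 b3 k * aw_basis p c k u + aw_lowering p b1 b2 b3 k * aw_basis p c (k-1) u"
      unfolding basis_u basis_pred aw_eigenvalue_def aw_lowering_def \<open>p^k = P*p\<close> \<open>p^(k-1) = P\<close>
      using assms \<open>P \<noteq> 0\<close> by (simp add: field_simps; simp add: algebra_simps)
    finally show ?thesis .
  qed
qed

lemma aw_op_sum:
  "aw_op p c b1 b2 b3 (\<lambda>v. \<Sum>k\<in>K. a k * f k v) u = (\<Sum>k\<in>K. a k * aw_op p c b1 b2 b3 (f k) u)"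
  unfolding aw_op_def by (simp add: sum_distrib_left sum.distrib sum_subtractf algebra_simps)

lemma aw_op_diff:
  "aw_op p c b1 b2 b3 (\<lambda>v. f v - h v) u = aw_op p c b1 b2 b3 f u - aw_op p c b1 b2 b3 h u"
  unfolding aw_op_def by (simp add: algebra_simps)

text \<open>
  With a3 = u and a4 = c/u, the k-th term of the 4phi3 series is
  phi43_coeff p a1 a2 b1 b2 b3 k * aw_basis p c k u, and the balancing condition
  reads b1 b2 b3 = p a1 a2 c.
\<close>

definition phi43_coeff ::
  "complex \<Rightarrow> complex \<Rightarrow> complex \<Rightarrow> complex \<Rightarrow> complex \<Rightarrow> complex \<Rightarrow> nat \<Rightarrow> complex" where
  "phi43_coeff p a1 a2 b1 b2 b3 k =
     qpoch a1 p k * qpoch a2 p k * p^k / (qpoch b1 p k * qpoch b2 p k * qpoch b3 p k * qpoch p p k)"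

lemma phi43_coeff_recurrence:
  assumes "p \<noteq> 0" "c \<noteq> 0"
    and a1: "a1 = inverse (p^m)"
    and balanced: "b1*b2*b3 = p*a1*a2*c"
    and nonzero: "qpoch b1 p (Suc k) \<noteq> 0" "qpoch b2 p (Suc k) \<noteq> 0" "qpoch b3 p (Suc k) \<noteq> 0"
      "qpoch p p (Suc k) \<noteq> 0"
  shows "phi43_coeff p a1 a2 b1 b2 b3 (Suc k) * aw_lowering p b1 b2 b3 (Suc k)
       = (aw_eigenvalue p c b1 b2 b3 m - aw_eigenvalue p c b1 b2 b3 k) * phi43_coeff p a1 a2 b1 b2 b3 k"
proof -
  define X where "X = p^k"
  have "X \<noteq> 0" using assms by (simp add: X_def)
  have "qpoch b1 p k \<noteq> 0" "qpoch b2 p k \<noteq> 0" "qpoch b3 p k \<noteq> 0" "qpoch p p k \<noteq> 0"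
    "1 - b1*X \<noteq> 0" "1 - b2*X \<noteq> 0" "1 - b3*X \<noteq> 0" "1 - p*X \<noteq> 0"
    using nonzero unfolding qpoch_Suc X_def by (auto simp: mult.commute)
  note nz = this \<open>X \<noteq> 0\<close> assms(1,2)
  have "b1*b2*b3/(p*c) = a1*a2" using balanced assms by (simp add: field_simps)
  then have "aw_eigenvalue p c b1 b2 b3 m - aw_eigenvalue p c b1 b2 b3 k
      = (a1 - 1)*(1 - a2) - (inverse X - 1)*(1 - a1*a2*X)"
    unfolding aw_eigenvalue_def X_def using a1 assms by (simp add: algebra_simps)
  also have "\<dots> = - (1 - a1*X)*(1 - a2*X) / X"
    using nz by (simp add: field_simps; simp add: algebra_simps)
  finally have eigen_diff: "aw_eigenvalue p c b1 b2 b3 m - aw_eigenvalue p c b1 b2 b3 k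
      = - (1 - a1*X)*(1 - a2*X) / X" .
  define r where "r = (1-a1*X)*(1-a2*X)*p / ((1-b1*X)*(1-b2*X)*(1-b3*X)*(1-p*X))"
  have coeff_Suc: "phi43_coeff p a1 a2 b1 b2 b3 (Suc k) = phi43_coeff p a1 a2 b1 b2 b3 k * r"
    unfolding phi43_coeff_def qpoch_Suc r_def X_def using nz by (simp add: field_simps)
  have "r * aw_lowering p b1 b2 b3 (Suc k) = - (1 - a1*X)*(1 - a2*X) / X"
  proof -
    have cancel: "N * p / (d1*d2*d3*d4) * (I*d1*d2*d3) = N * (p*I / d4)"
      if "d1 \<noteq> 0" "d2 \<noteq> 0" "d3 \<noteq> 0" "d4 \<noteq> 0" for N I d1 d2 d3 d4 :: complex
      using that by (simp add: field_simps)
    have lowering: "aw_lowering p b1 b2 b3 (Suc k) = (1 - inverse (p*X))*(1-b1*X)*(1-b2*X)*(1-b3*X)"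
      unfolding aw_lowering_def X_def by simp
    have "p * (1 - inverse (p*X)) / (1 - p*X) = - 1 / X"
      using nz by (simp add: field_simps)
    then show ?thesis
      unfolding r_def lowering cancel[OF nz(5-8)] using nz by (simp add: field_simps)
  qed
  then show ?thesis
    unfolding coeff_Suc eigen_diff mult.assoc by (simp add: mult.commute)
qed

lemma aw_op_phi43_series:
  assumes "p \<noteq> 0" "c \<noteq> 0" "u \<noteq> 0" "u^2 \<noteq> c" "u^2 \<noteq> c*p" "p*u^2 \<noteq> c"
    and a1: "a1 = inverse (p^m)"
    and balanced: "b1*b2*b3 = p*a1*a2*c"
    and nonzero: "qpoch b1 p M \<noteq> 0" "qpoch b2 p M \<noteq> 0" "qpoch b3 p M \<noteq> 0" "qpoch p p M \<noteq> 0"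
    and top: "(aw_eigenvalue p c b1 b2 b3 m - aw_eigenvalue p c b1 b2 b3 M)
      * phi43_coeff p a1 a2 b1 b2 b3 M * aw_basis p c M u = 0"
  shows "aw_op p c b1 b2 b3 (\<lambda>v. \<Sum>k\<le>M. phi43_coeff p a1 a2 b1 b2 b3 k * aw_basis p c k v) u
    = aw_eigenvalue p c b1 b2 b3 m * (\<Sum>k\<le>M. phi43_coeff p a1 a2 b1 b2 b3 k * aw_basis p c k u)"
proof -
  let ?a = "phi43_coeff p a1 a2 b1 b2 b3" and ?\<mu> = "aw_eigenvalue p c b1 b2 b3"
  let ?\<nu> = "aw_lowering p b1 b2 b3" and ?f = "\<lambda>k. aw_basis p c k u"
  have recurrence: "?a (Suc k) * ?\<nu> (Suc k) = (?\<mu> m - ?\<mu> k) * ?a k" if "k < M" for k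
    using that nonzero qpoch_nonzero_le[of _ p M "Suc k"]
    by (intro phi43_coeff_recurrence[OF assms(1,2) a1 balanced]) auto
  have "(\<Sum>k\<le>M. ?a k * (?\<nu> k * ?f (k-1))) = (\<Sum>k<M. ?a (Suc k) * ?\<nu> (Suc k) * ?f k)"
  proof (cases M)
    case (Suc M')
    have "?\<nu> 0 = 0" by (simp add: aw_lowering_def)
    then show ?thesis
      unfolding Suc sum.atMost_Suc_shift by (simp add: lessThan_Suc_atMost mult_ac)
  qed (simp add: aw_lowering_def)
  also have "\<dots> = (\<Sum>k<M. (?\<mu> m - ?\<mu> k) * ?a k * ?f k)"
    using recurrence by (intro sum.cong) auto
  finally have lowered: "(\<Sum>k\<le>M. ?a k * (?\<nu> k * ?f (k-1))) = (\<Sum>k<M. (?\<mu> m - ?\<mu> k) * ?a k * ?f k)" .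
  have "aw_op p c b1 b2 b3 (\<lambda>v. \<Sum>k\<le>M. ?a k * aw_basis p c k v) u
      = (\<Sum>k\<le>M. ?\<mu> k * ?a k * ?f k) + (\<Sum>k\<le>M. ?a k * (?\<nu> k * ?f (k-1)))"
    unfolding aw_op_sum aw_op_basis[OF assms(1-6)] by (simp add: sum.distrib algebra_simps)
  also have "\<dots> = (\<Sum>k\<le>M. ?\<mu> k * ?a k * ?f k) + (\<Sum>k<M. (?\<mu> m - ?\<mu> k) * ?a k * ?f k)"
    unfolding lowered ..
  also have "\<dots> = (\<Sum>k\<le>M. ?\<mu> m * (?a k * ?f k)) - (?\<mu> m - ?\<mu> M) * ?a M * ?f M"
    unfolding lessThan_Suc_atMost[symmetric] sum.lessThan_Suc
    by (simp add: algebra_simps sum.distrib sum_subtractf)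
  finally show ?thesis using top by (simp add: sum_distrib_left)
qed

lemma aw_basis_at_1: "0 < k \<Longrightarrow> aw_basis p c k 1 = 0"
  unfolding aw_basis_def qpoch_def by (auto intro: prod_zero bexI[of _ 0])

lemma phi43_series_at_1:
  "(\<Sum>k\<le>M. phi43_coeff p a1 a2 b1 b2 b3 k * aw_basis p c k 1) = 1"
proof -
  have "(\<Sum>k\<le>M. phi43_coeff p a1 a2 b1 b2 b3 k * aw_basis p c k 1)
      = (\<Sum>k\<in>{0}. phi43_coeff p a1 a2 b1 b2 b3 k * aw_basis p c k 1)"
    by (intro sum.mono_neutral_right) (auto simp: aw_basis_at_1)
  then show ?thesis by (simp add: phi43_coeff_def aw_basis_def)
qed

lemma aw_up_square:
  fixes p g T u :: complex
  assumes "u^2 \<noteq> g*p" "u^2 \<noteq> g*p^2"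
  shows "aw_up p (-g*p) T (-T) (g*p) u = aw_up (p^2) (g^2*p^2) (T^2) (g*p) (g*p^2) (u^2)"
proof -
  let ?w = "u^2"
  have "(?w - g*p) * (?w - g*p^2) \<noteq> 0" using assms by simp
  have "aw_up (p^2) (g^2*p^2) (T^2) (g*p) (g*p^2) ?w
      = ((?w - T^2) * (?w - g^2*p^2)) * ((?w - g*p) * (?w - g*p^2))
        / (((?w + g*p) * (?w + g*p^2)) * ((?w - g*p) * (?w - g*p^2)))"
    unfolding aw_up_def by (simp add: algebra_simps power2_eq_square)
  also have "\<dots> = (?w - T^2) * (?w - g^2*p^2) / ((?w + g*p) * (?w + g*p^2))"
    by (rule mult_divide_mult_cancel_right) fact
  also have "\<dots> = aw_up p (-g*p) T (-T) (g*p) u"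
    unfolding aw_up_def by (simp add: algebra_simps power2_eq_square)
  finally show ?thesis ..
qed

lemma aw_down_square:
  fixes p g T u :: complex
  assumes "p \<noteq> 0" "g \<noteq> 0" "u^2 \<noteq> g" "u^2 \<noteq> g*p"
  shows "aw_down p (-g*p) T (-T) (g*p) u = aw_down (p^2) (g^2*p^2) (T^2) (g*p) (g*p^2) (u^2)"
proof -
  let ?w = "u^2"
  have "g^2*p^3 * (?w - g) * (?w - g*p) \<noteq> 0" using assms by simp
  have "aw_down (p^2) (g^2*p^2) (T^2) (g*p) (g*p^2) ?w
      = ((?w - 1) * (T^2*?w - g^2*p^2)) * (g^2*p^3 * (?w - g) * (?w - g*p))
        / ((p * (?w + g) * (?w + g*p)) * (g^2*p^3 * (?w - g) * (?w - g*p)))"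
    unfolding aw_down_def by (simp add: algebra_simps power2_eq_square power3_eq_cube)
  also have "\<dots> = (?w - 1) * (T^2*?w - g^2*p^2) / (p * (?w + g) * (?w + g*p))"
    by (rule mult_divide_mult_cancel_right) fact
  also have "\<dots> = aw_down p (-g*p) T (-T) (g*p) u"
  proof -
    have "aw_down p (-g*p) T (-T) (g*p) u
        = ((?w - 1) * (T^2*?w - g^2*p^2)) * (- g*p) / ((p * (?w + g) * (?w + g*p)) * (- g*p))"
      unfolding aw_down_def by (simp add: algebra_simps power2_eq_square)
    then show ?thesis using assms by simp
  qed
  finally show ?thesis ..
qed

lemma aw_op_square:
  fixes p g T u :: complex
  assumes "p \<noteq> 0" "g \<noteq> 0" "u \<noteq> 0" "u^2 \<noteq> g" "u^2 \<noteq> g*p" "u^2 \<noteq> g*p^2"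
  shows "aw_op p (-g*p) T (-T) (g*p) (\<lambda>v. F (v^2)) u
    = aw_op (p^2) (g^2*p^2) (T^2) (g*p) (g*p^2) F (u^2)"
  unfolding aw_op_def aw_up_square[OF assms(5,6)] aw_down_square[OF assms(1,2,4,5)]
  by (simp add: power_divide power_mult_distrib)

text \<open>
  Since aw_down vanishes at u = 1, the eigenvalue equation at the points u = p^-y is a
  recurrence that determines f on these points from f 1.
\<close>

lemma aw_op_grid_unique:
  assumes "p \<noteq> 0"
    and eigen: "\<And>y. y < M \<Longrightarrow> aw_op p c b1 b2 b3 f (inverse (p^y)) = \<mu> * f (inverse (p^y))"
    and up_nonzero: "\<And>y. y < M \<Longrightarrow> aw_up p c b1 b2 b3 (inverse (p^y)) \<noteq> 0"
    and "f 1 = 0" "x \<le> M"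
  shows "f (inverse (p^x)) = 0"
proof -
  have "\<forall>y\<le>x. f (inverse (p^y)) = 0" using \<open>x \<le> M\<close>
  proof (induction x)
    case 0
    then show ?case using \<open>f 1 = 0\<close> by simp
  next
    case (Suc x)
    then have "x < M" and IH: "\<forall>y\<le>x. f (inverse (p^y)) = 0" by auto
    then have f0: "f (inverse (p^x)) = 0" by simp
    have down: "aw_down p c b1 b2 b3 (inverse (p^x)) * f (p * inverse (p^x)) = 0"
    proof (cases x)
      case (Suc x')
      have "p * inverse (p^x) = inverse (p^x')" using \<open>p \<noteq> 0\<close> Suc by simp
      moreover have "f (inverse (p^x')) = 0" using IH Suc by simp
      ultimately show ?thesis by simp
    qed (simp add: aw_down_def)
    have "aw_up p c b1 b2 b3 (inverse (p^x)) * f (inverse (p^x) / p)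
        + aw_down p c b1 b2 b3 (inverse (p^x)) * f (p * inverse (p^x)) = 0"
      using eigen[OF \<open>x < M\<close>] unfolding aw_op_def f0 by simp
    then have "aw_up p c b1 b2 b3 (inverse (p^x)) * f (inverse (p^x) / p) = 0"
      unfolding down by simp
    then have "f (inverse (p^Suc x)) = 0"
      using up_nonzero[OF \<open>x < M\<close>] by (simp add: field_simps)
    then show ?case using IH by (auto simp: le_Suc_eq)
  qed
  then show ?thesis by simp
qed

section \<open>Polynomial structure\<close>

lemma aw_basis_eq_poly:
  assumes "z \<noteq> 0"
  shows "aw_basis p c k z = poly (\<Prod>j<k. [:1 + c * p^(2*j), - (p^j):]) (z + c/z)"
  unfolding aw_basis_def qpoch_def poly_prod prod.distrib[symmetric] using assms
  by (intro prod.cong refl) (simp add: field_simps power_mult power2_eq_square mult_2 power_add)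

lemma aw_basis_square_eq_poly:
  assumes "z \<noteq> 0"
  shows "aw_basis (p^2) (c^2) k (z^2)
    = poly (\<Prod>j<k. [:1 + c * p^(2*j), - (p^j):] * [:1 + c * p^(2*j), p^j:]) (z + c/z)"
proof -
  have factor: "(1 - z^2 * X^2) * (1 - c^2/z^2 * X^2)
      = (1 + c * X^2 - X * (z + c/z)) * (1 + c * X^2 + X * (z + c/z))" for X :: complex
    using assms by (simp add: field_simps power2_eq_square)
  have "(1 - z^2 * (p^2)^j) * (1 - c^2/z^2 * (p^2)^j)
      = poly ([:1 + c * p^(2*j), - (p^j):] * [:1 + c * p^(2*j), p^j:]) (z + c/z)" for j
  proof -
    have "(p^2)^j = (p^j)^2" "p^(2*j) = (p^j)^2"
      by (simp_all add: power_mult[symmetric] mult.commute)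
    moreover have "poly ([:1 + c * X^2, - X:] * [:1 + c * X^2, X:]) L
        = (1 + c * X^2 - X * L) * (1 + c * X^2 + X * L)" for X L :: complex
      by (simp add: algebra_simps)
    ultimately show ?thesis by (simp only: factor)
  qed
  then show ?thesis
    unfolding aw_basis_def qpoch_def poly_prod prod.distrib[symmetric] by simp
qed

lemma degree_prod_lessThan_le: "(\<And>j. degree (f j) \<le> d) \<Longrightarrow> degree (\<Prod>j<k. f j) \<le> k * d"
proof -
  assume "\<And>j. degree (f j) \<le> d"
  then have "sum (degree \<circ> f) {..<k} \<le> sum (\<lambda>_. d) {..<k}"
    by (intro sum_mono) simp
  then show ?thesis
    using degree_prod_sum_le[of "{..<k}" f] by simp
qed

lemma degree_linear_le: "degree [:a, b:] \<le> 1"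
  using degree_pCons_le[of a "[:b:]"] by simp

lemma aw_series_eq_poly:
  assumes "\<And>z. f z = (\<Sum>k\<le>M. a k * aw_basis p c k z)"
  obtains P where "degree P \<le> M" and "\<And>z. z \<noteq> 0 \<Longrightarrow> f z = poly P (z + c/z)"
proof
  let ?P = "\<Sum>k\<le>M. smult (a k) (\<Prod>j<k. [:1 + c * p^(2*j), - (p^j):])"
  show "degree ?P \<le> M"
  proof (intro degree_sum_le order.trans[OF degree_smult_le])
    fix k assume "k \<in> {..M}"
    have "degree (\<Prod>j<k. [:1 + c * p^(2*j), - (p^j):]) \<le> k * 1"
      by (rule degree_prod_lessThan_le) (rule degree_linear_le)
    then show "degree (\<Prod>j<k. [:1 + c * p^(2*j), - (p^j):]) \<le> M"
      using \<open>k \<in> {..M}\<close> by simp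
  qed simp
  show "f z = poly ?P (z + c/z)" if "z \<noteq> 0" for z
    unfolding assms poly_sum poly_smult aw_basis_eq_poly[OF that] ..
qed

lemma aw_series_square_eq_poly:
  assumes "\<And>w. f w = (\<Sum>k\<le>M. a k * aw_basis (p^2) (c^2) k w)"
  obtains P where "degree P \<le> 2 * M" and "\<And>z. z \<noteq> 0 \<Longrightarrow> f (z^2) = poly P (z + c/z)"
proof
  let ?P = "\<Sum>k\<le>M. smult (a k) (\<Prod>j<k. [:1 + c * p^(2*j), - (p^j):] * [:1 + c * p^(2*j), p^j:])"
  show "degree ?P \<le> 2 * M"
  proof (intro degree_sum_le order.trans[OF degree_smult_le])
    fix k assume "k \<in> {..M}"
    have "degree ([:1 + c * p^(2*j), - (p^j):] * [:1 + c * p^(2*j), p^j:]) \<le> 2" for j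
      using degree_mult_le[of "[:1 + c * p^(2*j), - (p^j):]" "[:1 + c * p^(2*j), p^j:]"]
        degree_linear_le[of "1 + c * p^(2*j)" "- (p^j)"] degree_linear_le[of "1 + c * p^(2*j)" "p^j"]
      by linarith
    then have "degree (\<Prod>j<k. [:1 + c * p^(2*j), - (p^j):] * [:1 + c * p^(2*j), p^j:]) \<le> k * 2"
      by (rule degree_prod_lessThan_le)
    then show "degree (\<Prod>j<k. [:1 + c * p^(2*j), - (p^j):] * [:1 + c * p^(2*j), p^j:]) \<le> 2 * M"
      using \<open>k \<in> {..M}\<close> by simp
  qed simp
  show "f (z^2) = poly ?P (z + c/z)" if "z \<noteq> 0" for z
    unfolding assms poly_sum poly_smult aw_basis_square_eq_poly[OF that] ..
qed

definition is_polyfun :: "('a::comm_semiring_0 \<Rightarrow> 'a) \<Rightarrow> bool" where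
  "is_polyfun f \<longleftrightarrow> (\<exists>P. poly P = f)"

lemma is_polyfun_const: "is_polyfun (\<lambda>x. c)"
  unfolding is_polyfun_def by (rule exI[of _ "[:c:]"]) auto

lemma is_polyfun_ident: "is_polyfun (\<lambda>x::'a::comm_semiring_1. x)"
  unfolding is_polyfun_def by (rule exI[of _ "[:0, 1:]"]) auto

lemma is_polyfun_add: "is_polyfun f \<Longrightarrow> is_polyfun h \<Longrightarrow> is_polyfun (\<lambda>x. f x + h x)"
  unfolding is_polyfun_def by (metis poly_add)

lemma is_polyfun_diff:
  fixes f h :: "'a::comm_ring \<Rightarrow> 'a"
  shows "is_polyfun f \<Longrightarrow> is_polyfun h \<Longrightarrow> is_polyfun (\<lambda>x. f x - h x)"
  unfolding is_polyfun_def by (metis poly_diff)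

lemma is_polyfun_mult: "is_polyfun f \<Longrightarrow> is_polyfun h \<Longrightarrow> is_polyfun (\<lambda>x. f x * h x)"
  unfolding is_polyfun_def by (metis poly_mult)

lemma is_polyfun_uminus:
  fixes f :: "'a::comm_ring \<Rightarrow> 'a"
  shows "is_polyfun f \<Longrightarrow> is_polyfun (\<lambda>x. - f x)"
  unfolding is_polyfun_def by (metis poly_minus)

lemma is_polyfun_power:
  fixes f :: "'a::comm_semiring_1 \<Rightarrow> 'a"
  shows "is_polyfun f \<Longrightarrow> is_polyfun (\<lambda>x. f x ^ m)"
  unfolding is_polyfun_def by (metis poly_power)

lemma is_polyfun_divide_const:
  fixes f :: "'a::field \<Rightarrow> 'a"
  shows "is_polyfun f \<Longrightarrow> is_polyfun (\<lambda>x. f x / c)"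
  unfolding divide_inverse by (intro is_polyfun_mult is_polyfun_const)

lemma is_polyfun_sum: "(\<And>k. is_polyfun (f k)) \<Longrightarrow> is_polyfun (\<lambda>x. \<Sum>k\<in>A. f k x)"
  by (induction A rule: infinite_finite_induct) (simp_all add: is_polyfun_const is_polyfun_add)

lemma is_polyfun_prod:
  fixes f :: "'b \<Rightarrow> 'a::comm_semiring_1 \<Rightarrow> 'a"
  shows "(\<And>k. is_polyfun (f k)) \<Longrightarrow> is_polyfun (\<lambda>x. \<Prod>k\<in>A. f k x)"
  by (induction A rule: infinite_finite_induct) (simp_all add: is_polyfun_const is_polyfun_mult)

lemmas is_polyfun_intros = is_polyfun_sum is_polyfun_prod is_polyfun_add is_polyfun_diff
  is_polyfun_uminus is_polyfun_mult is_polyfun_power is_polyfun_divide_const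
  is_polyfun_ident is_polyfun_const

lemma is_polyfun_eq_0_if_nonreal:
  fixes f :: "complex \<Rightarrow> complex"
  assumes "is_polyfun f" and "\<And>g. Im g \<noteq> 0 \<Longrightarrow> f g = 0"
  shows "f x = 0"
proof -
  obtain P where P: "poly P = f" using assms(1) unfolding is_polyfun_def by blast
  have "range (\<lambda>m::nat. \<i> * of_nat (Suc m)) \<subseteq> {x. poly P x = 0}"
    using assms(2) P by auto
  moreover have "infinite (range (\<lambda>m::nat. \<i> * of_nat (Suc m)))"
    by (rule range_inj_infinite) (auto simp: inj_def)
  ultimately have "P = 0"
    using poly_roots_finite finite_subset by blast
  then show ?thesis using P by auto
qed

section \<open>The two sides of the transformation\<close>

text \<open>
  At z = q^-x these are the two sides of the theorem, the right one evaluated at z^2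
  (phi43_term_eq_lhs_series, phi43_term_eq_rhs_series).
\<close>

definition lhs_series :: "complex \<Rightarrow> nat \<Rightarrow> nat \<Rightarrow> complex \<Rightarrow> complex \<Rightarrow> complex" where
  "lhs_series Q N n g z = (\<Sum>k\<le>N.
     phi43_coeff Q (inverse (Q^(2*n))) (inverse (Q^(2*(N-n)+1))) (inverse (Q^N)) (- inverse (Q^N)) (g*Q) k
     * aw_basis Q (-g*Q) k z)"

definition rhs_series :: "complex \<Rightarrow> nat \<Rightarrow> nat \<Rightarrow> complex \<Rightarrow> complex \<Rightarrow> complex" where
  "rhs_series Q N n g w = (\<Sum>k\<le>n.
     phi43_coeff (Q^2) (inverse (Q^(2*n))) (inverse (Q^(2*(N-n)+1))) (inverse (Q^(2*N))) (g*Q) (g*Q^2) k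
     * aw_basis (Q^2) (g^2*Q^2) k w)"

lemma lhs_series_at_1: "lhs_series Q N n g 1 = 1"
  unfolding lhs_series_def by (rule phi43_series_at_1)

lemma rhs_series_at_1: "rhs_series Q N n g 1 = 1"
  unfolding rhs_series_def by (rule phi43_series_at_1)

lemma phi43_term_eq_lhs_series:
  fixes q :: real
  defines "Q \<equiv> complex_of_real q"
  assumes "0 < q" "K \<le> N"
    and "inverse (Q^(2*n)) = inverse (Q^K) \<or> qpow q (- x) = inverse (Q^K)"
  shows "phi43_term (inverse (Q^(2*n))) (inverse (Q^(2*(N-n)+1))) (qpow q (- x)) (- g * qpow q (x + 1))
      (inverse (Q^N)) (- inverse (Q^N)) (g*Q) Q
    = lhs_series Q N n g (qpow q (- x))"
proof -
  have "- g * qpow q (x + 1) = (-g*Q) / qpow q (- x)"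
    using assms by (simp add: qpow_plus_1)
  moreover have "Q \<noteq> 0" using assms by simp
  ultimately show ?thesis
    unfolding lhs_series_def using assms(3,4)
    by (subst phi43_term_eq_sum[where K = K and M = N])
       (auto simp: phi43_coeff_def aw_basis_def field_simps intro!: sum.cong)
qed

lemma phi43_term_eq_rhs_series:
  fixes q :: real
  defines "Q \<equiv> complex_of_real q"
  assumes "0 < q"
  shows "phi43_term (inverse (Q^(2*n))) (inverse (Q^(2*(N-n)+1))) (qpow q (- 2 * x)) (g^2 * qpow q (2 * x + 2))
      (inverse (Q^(2*N))) (g*Q) (g*Q^2) (Q^2)
    = rhs_series Q N n g (qpow q (- x)^2)"
proof -
  have "qpow q (- 2 * x) = qpow q (- x)^2"
    using qpow_double[of q "- x"] by simp
  moreover have "qpow q (2 * x + 2) = qpow q (x + 1)^2"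
    using qpow_double[of q "x + 1"] by (simp add: algebra_simps)
  then have "g^2 * qpow q (2 * x + 2) = (g^2*Q^2) / qpow q (- x)^2"
    unfolding qpow_plus_1[OF \<open>0 < q\<close>] Q_def by (simp add: power_divide)
  moreover have "Q^2 \<noteq> 0" "inverse (Q^(2*n)) = inverse ((Q^2)^n)"
    using assms by (simp_all add: power_mult)
  ultimately show ?thesis
    unfolding rhs_series_def
    by (subst phi43_term_eq_sum[where K = n and M = n])
       (auto simp: phi43_coeff_def aw_basis_def field_simps intro!: sum.cong)
qed

lemma phi43_coeff_eq_divide:
  "phi43_coeff p a1 a2 b1 b2 b3 k = phi43_coeff p a1 a2 b1 0 0 k / (qpoch b2 p k * qpoch b3 p k)"
proof -
  have "qpoch 0 p k = 1" by (simp add: qpoch_def)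
  then show ?thesis unfolding phi43_coeff_def by (simp add: divide_divide_eq_left ac_simps)
qed

text \<open>Multiplying by (gq;q)_2N clears every denominator that depends on g.\<close>

lemma lhs_series_cleared:
  assumes "qpoch (g*Q) Q (2*N) \<noteq> 0"
  shows "qpoch (g*Q) Q (2*N) * lhs_series Q N n g z = (\<Sum>k\<le>N.
      phi43_coeff Q (inverse (Q^(2*n))) (inverse (Q^(2*(N-n)+1))) (inverse (Q^N)) 0 0 k
      / qpoch (- inverse (Q^N)) Q k * qpoch (g*Q*Q^k) Q (2*N-k) * aw_basis Q (-g*Q) k z)"
  unfolding lhs_series_def sum_distrib_left
proof (intro sum.cong refl)
  fix k assume "k \<in> {..N}"
  then have split: "qpoch (g*Q) Q (2*N) = qpoch (g*Q) Q k * qpoch (g*Q*Q^k) Q (2*N-k)"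
    using qpoch_add[of "g*Q" Q k "2*N-k"] by simp
  then have "qpoch (g*Q) Q k \<noteq> 0" using assms by auto
  then show "qpoch (g*Q) Q (2*N) * (phi43_coeff Q (inverse (Q^(2*n))) (inverse (Q^(2*(N-n)+1)))
        (inverse (Q^N)) (- inverse (Q^N)) (g*Q) k * aw_basis Q (-g*Q) k z)
      = phi43_coeff Q (inverse (Q^(2*n))) (inverse (Q^(2*(N-n)+1))) (inverse (Q^N)) 0 0 k
        / qpoch (- inverse (Q^N)) Q k * qpoch (g*Q*Q^k) Q (2*N-k) * aw_basis Q (-g*Q) k z"
  proof -
    have "G * R * (C / (B * G) * X) = C / B * R * X" if "G \<noteq> 0" for G R C B X :: complex
      using that by (cases "B = 0") (simp_all add: field_simps)
    then show ?thesis
      unfolding split phi43_coeff_eq_divide[of _ _ _ _ "- inverse (Q^N)"] using \<open>qpoch (g*Q) Q k \<noteq> 0\<close> .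
  qed
qed

lemma rhs_series_cleared:
  assumes "qpoch (g*Q) Q (2*N) \<noteq> 0" "n \<le> N"
  shows "qpoch (g*Q) Q (2*N) * rhs_series Q N n g w = (\<Sum>k\<le>n.
      phi43_coeff (Q^2) (inverse (Q^(2*n))) (inverse (Q^(2*(N-n)+1))) (inverse (Q^(2*N))) 0 0 k
      * qpoch (g*Q*Q^(2*k)) Q (2*N-2*k) * aw_basis (Q^2) (g^2*Q^2) k w)"
  unfolding rhs_series_def sum_distrib_left
proof (intro sum.cong refl)
  fix k assume "k \<in> {..n}"
  then have "qpoch (g*Q) Q (2*N) = qpoch (g*Q) Q (2*k) * qpoch (g*Q*Q^(2*k)) Q (2*N-2*k)"
    using qpoch_add[of "g*Q" Q "2*k" "2*N-2*k"] assms(2) by simp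
  moreover have "qpoch (g*Q) Q (2*k) = qpoch (g*Q) (Q^2) k * qpoch (g*Q^2) (Q^2) k"
    using qpoch_base_square[of "g*Q" Q k] by (simp add: power2_eq_square mult.assoc)
  ultimately have split: "qpoch (g*Q) Q (2*N)
      = qpoch (g*Q) (Q^2) k * qpoch (g*Q^2) (Q^2) k * qpoch (g*Q*Q^(2*k)) Q (2*N-2*k)"
    by simp
  then have "qpoch (g*Q) (Q^2) k * qpoch (g*Q^2) (Q^2) k \<noteq> 0" using assms by auto
  then show "qpoch (g*Q) Q (2*N) * (phi43_coeff (Q^2) (inverse (Q^(2*n))) (inverse (Q^(2*(N-n)+1)))
        (inverse (Q^(2*N))) (g*Q) (g*Q^2) k * aw_basis (Q^2) (g^2*Q^2) k w)
      = phi43_coeff (Q^2) (inverse (Q^(2*n))) (inverse (Q^(2*(N-n)+1))) (inverse (Q^(2*N))) 0 0 k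
        * qpoch (g*Q*Q^(2*k)) Q (2*N-2*k) * aw_basis (Q^2) (g^2*Q^2) k w"
  proof -
    have "G * R * (C / G * X) = C * R * X" if "G \<noteq> 0" for G R C X :: complex
      using that by (simp add: field_simps)
    then show ?thesis
      unfolding split phi43_coeff_eq_divide[of _ _ _ _ "g*Q"]
      using \<open>qpoch (g*Q) (Q^2) k * qpoch (g*Q^2) (Q^2) k \<noteq> 0\<close> .
  qed
qed

section \<open>Nonreal parameter\<close>

text \<open>
  For nonreal g every q-shifted factorial in g and the leading coefficient of the recurrence
  on the grid are nonzero.
\<close>

locale quadratic_transformation =
  fixes q :: real and N n :: nat and g :: complex
  assumes q_pos: "0 < q" and q_less_1: "q < 1" and n_le_N: "n \<le> N"
    and g_nonreal: "Im g \<noteq> 0"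
begin

abbreviation Q :: complex where "Q \<equiv> complex_of_real q"

lemma Q_nonzero: "Q \<noteq> 0"
  using q_pos by simp

lemma g_nonzero: "g \<noteq> 0"
  using g_nonreal by auto

lemma g_mult_real_neq: "r \<noteq> 0 \<Longrightarrow> g * complex_of_real r \<noteq> complex_of_real s"
  using g_nonreal by (auto simp: complex_eq_iff)

lemma g_square_mult_real_neq:
  assumes "0 < r" "0 \<le> s"
  shows "g^2 * complex_of_real r \<noteq> complex_of_real s"
proof
  assume "g^2 * complex_of_real r = complex_of_real s"
  then have "Im (g^2) = 0" "r * Re (g^2) = s"
    using assms by (auto simp: complex_eq_iff mult.commute)
  then have "Im (g^2) = 0" "0 \<le> Re (g^2)"
    using assms by (auto simp: zero_le_mult_iff)
  then show False
    using g_nonreal by (auto simp: power2_eq_square zero_le_mult_iff mult_le_0_iff)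
qed

lemma Q_power_inj: "Q^i = Q^j \<Longrightarrow> i = j"
  using q_pos q_less_1 by (metis of_real_eq_iff of_real_power power_inject_exp' less_irrefl)

lemma one_minus_g_power_nonzero: "1 - g * Q^k \<noteq> 0"
  using g_mult_real_neq[of "q^k" 1] q_pos by auto

lemma one_minus_power_nonzero: "0 < k \<Longrightarrow> 1 - Q^k \<noteq> 0"
  using Q_power_inj[of k 0] by auto

lemma one_plus_power_nonzero: "1 + Q^j * inverse (Q^k) \<noteq> 0"
proof -
  have "0 < 1 + q^j * inverse (q^k)" using q_pos by (simp add: add_pos_nonneg)
  then have "complex_of_real (1 + q^j * inverse (q^k)) \<noteq> 0" by (metis of_real_eq_0_iff less_irrefl)
  then show ?thesis by simp
qed

lemma qpoch_g_nonzero: "qpoch (g*Q) Q k \<noteq> 0"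
  using one_minus_g_power_nonzero[of "Suc _"] by (intro qpoch_nonzero) (simp add: mult.assoc)

lemma lhs_grid_nondegenerate:
  "inverse (Q^y)^2 \<noteq> -g*Q" "inverse (Q^y)^2 \<noteq> -g*Q*Q" "Q * inverse (Q^y)^2 \<noteq> -g*Q"
  "inverse (Q^y)^2 \<noteq> g" "inverse (Q^y)^2 \<noteq> g*Q" "inverse (Q^y)^2 \<noteq> g*Q^2"
  using g_mult_real_neq[of "- q" "inverse (q^y)^2"] g_mult_real_neq[of "- q*q" "inverse (q^y)^2"]
    g_mult_real_neq[of "- q" "q * inverse (q^y)^2"] g_mult_real_neq[of 1 "inverse (q^y)^2"]
    g_mult_real_neq[of q "inverse (q^y)^2"] g_mult_real_neq[of "q^2" "inverse (q^y)^2"] q_pos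
  by (auto simp: power2_eq_square)

lemma rhs_grid_nondegenerate:
  "(inverse (Q^y)^2)^2 \<noteq> g^2*Q^2" "(inverse (Q^y)^2)^2 \<noteq> g^2*Q^2*Q^2"
  "Q^2 * (inverse (Q^y)^2)^2 \<noteq> g^2*Q^2"
  using g_square_mult_real_neq[of "q^2" "(inverse (q^y)^2)^2"]
    g_square_mult_real_neq[of "q^2*q^2" "(inverse (q^y)^2)^2"]
    g_square_mult_real_neq[of "q^2" "q^2 * (inverse (q^y)^2)^2"] q_pos
  by auto

lemma lhs_series_eigen:
  assumes "y < N"
  shows "aw_op Q (-g*Q) (inverse (Q^N)) (- inverse (Q^N)) (g*Q) (lhs_series Q N n g) (inverse (Q^y))
    = aw_eigenvalue Q (-g*Q) (inverse (Q^N)) (- inverse (Q^N)) (g*Q) (2*n)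
      * lhs_series Q N n g (inverse (Q^y))"
  unfolding lhs_series_def[abs_def]
proof (rule aw_op_phi43_series)
  have "2*n + (2*(N-n)+1) = Suc (N+N)" using n_le_N by simp
  then have "Q^(2*n) * Q^(2*(N-n)+1) = Q*Q^N*Q^N"
    by (simp flip: power_add)
  then show "inverse (Q^N) * - inverse (Q^N) * (g*Q) = Q * inverse (Q^(2*n)) * inverse (Q^(2*(N-n)+1)) * (-g*Q)"
    using Q_nonzero by (simp add: field_simps)
  show "qpoch (inverse (Q^N)) Q N \<noteq> 0"
    using Q_power_inj by (intro qpoch_nonzero) (auto simp: field_simps Q_nonzero)
  show "qpoch (- inverse (Q^N)) Q N \<noteq> 0"
    using one_plus_power_nonzero by (intro qpoch_nonzero) (simp add: mult.commute)
  show "qpoch (g*Q) Q N \<noteq> 0" by (rule qpoch_g_nonzero)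
  show "qpoch Q Q N \<noteq> 0"
    using one_minus_power_nonzero[of "Suc _"] by (intro qpoch_nonzero) simp
  show "(aw_eigenvalue Q (-g*Q) (inverse (Q^N)) (- inverse (Q^N)) (g*Q) (2*n)
      - aw_eigenvalue Q (-g*Q) (inverse (Q^N)) (- inverse (Q^N)) (g*Q) N)
      * phi43_coeff Q (inverse (Q^(2*n))) (inverse (Q^(2*(N-n)+1))) (inverse (Q^N)) (- inverse (Q^N)) (g*Q) N
      * aw_basis Q (-g*Q) N (inverse (Q^y)) = 0"
    using qpoch_inverse_power_eq_0[OF Q_nonzero assms] by (simp add: aw_basis_def)
qed (use Q_nonzero g_nonzero lhs_grid_nondegenerate in simp_all)

lemma rhs_series_eigen:
  "aw_op (Q^2) (g^2*Q^2) (inverse (Q^(2*N))) (g*Q) (g*Q^2) (rhs_series Q N n g) (inverse (Q^y)^2)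
    = aw_eigenvalue (Q^2) (g^2*Q^2) (inverse (Q^(2*N))) (g*Q) (g*Q^2) n
      * rhs_series Q N n g (inverse (Q^y)^2)"
  unfolding rhs_series_def[abs_def]
proof (rule aw_op_phi43_series)
  show "inverse (Q^(2*n)) = inverse ((Q^2)^n)" by (simp add: power_mult)
  have "2*n + (2*(N-n)+1) = Suc (2*N)" using n_le_N by simp
  then have "Q^(2*n) * Q^(2*(N-n)+1) = Q*Q^(2*N)"
    by (simp flip: power_add)
  then show "inverse (Q^(2*N)) * (g*Q) * (g*Q^2) = Q^2 * inverse (Q^(2*n)) * inverse (Q^(2*(N-n)+1)) * (g^2*Q^2)"
    using Q_nonzero by (simp add: field_simps power2_eq_square)
  show "qpoch (inverse (Q^(2*N))) (Q^2) n \<noteq> 0"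
  proof (rule qpoch_nonzero)
    fix j assume "j < n"
    then have "2*j \<noteq> 2*N" using n_le_N by simp
    then show "1 - inverse (Q^(2*N)) * (Q^2)^j \<noteq> 0"
      using Q_nonzero by (auto simp: field_simps simp flip: power_mult dest!: Q_power_inj)
  qed
  show "qpoch (g*Q) (Q^2) n \<noteq> 0"
    using one_minus_g_power_nonzero[of "Suc (2*_)"]
    by (intro qpoch_nonzero) (simp add: mult.assoc flip: power_mult)
  show "qpoch (g*Q^2) (Q^2) n \<noteq> 0"
  proof (rule qpoch_nonzero)
    fix j
    have "g*Q^2*(Q^2)^j = g*Q^(2 + 2*j)" by (simp add: power_add power_mult power2_eq_square)
    then show "1 - g*Q^2*(Q^2)^j \<noteq> 0" using one_minus_g_power_nonzero[of "2 + 2*j"] by metis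
  qed
  show "qpoch (Q^2) (Q^2) n \<noteq> 0"
  proof (rule qpoch_nonzero)
    fix j
    have "Q^2*(Q^2)^j = Q^(2 + 2*j)" by (simp add: power_add power_mult power2_eq_square)
    then show "1 - Q^2*(Q^2)^j \<noteq> 0" using one_minus_power_nonzero[of "2 + 2*j"] by simp
  qed
qed (use Q_nonzero g_nonzero rhs_grid_nondegenerate in simp_all)

lemma aw_eigenvalues_eq:
  "aw_eigenvalue Q (-g*Q) (inverse (Q^N)) (- inverse (Q^N)) (g*Q) (2*n)
    = aw_eigenvalue (Q^2) (g^2*Q^2) (inverse (Q^(2*N))) (g*Q) (g*Q^2) n"
proof -
  have "(Q^2)^n = Q^(2*n)" "Q^(2*N) = Q^N*Q^N"
    by (simp_all add: power_mult[symmetric] mult_2 power_add)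
  then show ?thesis
    unfolding aw_eigenvalue_def using Q_nonzero g_nonzero by (simp add: field_simps power2_eq_square)
qed

lemma aw_up_grid_nonzero:
  assumes "y < N"
  shows "aw_up Q (-g*Q) (inverse (Q^N)) (- inverse (Q^N)) (g*Q) (inverse (Q^y)) \<noteq> 0"
proof -
  have "inverse (Q^y) \<noteq> inverse (Q^N)"
    using assms Q_power_inj by force
  moreover have "inverse (Q^y) + inverse (Q^N) \<noteq> 0"
    using one_plus_power_nonzero[of N y] Q_nonzero by (simp add: field_simps)
  moreover have "inverse (Q^y) \<noteq> g*Q" "inverse (Q^y) \<noteq> -g*Q"
    using g_mult_real_neq[of q "inverse (q^y)"] g_mult_real_neq[of "-q" "inverse (q^y)"] q_pos
    by auto
  ultimately show ?thesis
    unfolding aw_up_def using lhs_grid_nondegenerate(1,2)[of y] by (auto simp: add_eq_0_iff)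
qed

lemma lhs_series_eq_rhs_series_on_grid:
  assumes "x \<le> N"
  shows "lhs_series Q N n g (inverse (Q^x)) = rhs_series Q N n g (inverse (Q^x)^2)"
proof -
  let ?T = "inverse (Q^N)" and ?\<mu> = "aw_eigenvalue Q (-g*Q) (inverse (Q^N)) (- inverse (Q^N)) (g*Q) (2*n)"
  define f where "f v = lhs_series Q N n g v - rhs_series Q N n g (v^2)" for v
  have "f 1 = 0" by (simp add: f_def lhs_series_at_1 rhs_series_at_1)
  have "f (inverse (Q^x)) = 0"
  proof (rule aw_op_grid_unique[where f = f, OF Q_nonzero _ aw_up_grid_nonzero \<open>f 1 = 0\<close> assms])
    fix y assume "y < N"
    have "?T^2 = inverse (Q^(2*N))" by (simp add: power_mult power_inverse mult.commute)
    have "aw_op Q (-g*Q) ?T (-?T) (g*Q) (\<lambda>v. rhs_series Q N n g (v^2)) (inverse (Q^y))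
        = aw_op (Q^2) (g^2*Q^2) (?T^2) (g*Q) (g*Q^2) (rhs_series Q N n g) (inverse (Q^y)^2)"
      by (rule aw_op_square[OF Q_nonzero g_nonzero _ lhs_grid_nondegenerate(4-6)]) (use q_pos in simp)
    also have "\<dots> = ?\<mu> * rhs_series Q N n g (inverse (Q^y)^2)"
      unfolding \<open>?T^2 = inverse (Q^(2*N))\<close> rhs_series_eigen aw_eigenvalues_eq ..
    finally have "aw_op Q (-g*Q) ?T (-?T) (g*Q) (\<lambda>v. rhs_series Q N n g (v^2)) (inverse (Q^y))
        = ?\<mu> * rhs_series Q N n g (inverse (Q^y)^2)" .
    then show "aw_op Q (-g*Q) ?T (-?T) (g*Q) f (inverse (Q^y)) = ?\<mu> * f (inverse (Q^y))"
      unfolding f_def aw_op_diff lhs_series_eigen[OF \<open>y < N\<close>] by (simp add: algebra_simps)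
  qed
  then show ?thesis by (simp add: f_def)
qed

lemma grid_points_inj: "inj_on (\<lambda>x. inverse (Q^x) + (-g*Q) / inverse (Q^x)) {..N}"
proof (rule inj_onI)
  fix x y
  assume "inverse (Q^x) + (-g*Q) / inverse (Q^x) = inverse (Q^y) + (-g*Q) / inverse (Q^y)"
  then have "Im (inverse (Q^x) + (-g*Q) / inverse (Q^x)) = Im (inverse (Q^y) + (-g*Q) / inverse (Q^y))"
    by simp
  then have "Im g * q^Suc x = Im g * q^Suc y"
    by (simp add: divide_inverse flip: of_real_power)
  then have "q^Suc x = q^Suc y" using g_nonreal by simp
  then show "x = y"
    using q_pos q_less_1 by (metis Suc_inject power_inject_exp' less_irrefl)
qed

lemma lhs_series_eq_rhs_series:
  assumes "2*n \<le> N" "z \<noteq> 0"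
  shows "lhs_series Q N n g z = rhs_series Q N n g (z^2)"
proof -
  obtain PL where "degree PL \<le> N"
    and PL: "\<And>z. z \<noteq> 0 \<Longrightarrow> lhs_series Q N n g z = poly PL (z + (-g*Q)/z)"
    by (rule aw_series_eq_poly[OF lhs_series_def[of Q N n g]]) blast
  have square: "g^2*Q^2 = (-g*Q)^2" by (simp add: power_mult_distrib)
  obtain PR where "degree PR \<le> 2*n"
    and PR: "\<And>z. z \<noteq> 0 \<Longrightarrow> rhs_series Q N n g (z^2) = poly PR (z + (-g*Q)/z)"
    by (rule aw_series_square_eq_poly[OF rhs_series_def[of Q N n g, unfolded square]]) blast
  let ?A = "(\<lambda>x. inverse (Q^x) + (-g*Q) / inverse (Q^x)) ` {..N}"
  have "card ?A = Suc N" using card_image[OF grid_points_inj] by simp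
  have "PL = PR"
  proof (rule poly_eqI_degree)
    fix w assume "w \<in> ?A"
    then obtain x where "x \<le> N" "w = inverse (Q^x) + (-g*Q) / inverse (Q^x)" by auto
    moreover have "inverse (Q^x) \<noteq> 0" using Q_nonzero by simp
    ultimately show "poly PL w = poly PR w"
      using PL PR lhs_series_eq_rhs_series_on_grid by metis
  qed (use \<open>card ?A = Suc N\<close> \<open>degree PL \<le> N\<close> \<open>degree PR \<le> 2*n\<close> assms in auto)
  then show ?thesis using PL PR assms by simp
qed

end

section \<open>The transformation formula\<close>

lemma lhs_series_eq_rhs_series_from_nonreal:
  fixes q :: real
  assumes "0 < q" "q < 1" "n \<le> N"
    and nonzero: "qpoch (\<gamma> * complex_of_real q) (complex_of_real q) (2*N) \<noteq> 0"
    and agree: "\<And>g. Im g \<noteq> 0 \<Longrightarrow>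
      lhs_series (complex_of_real q) N n g z = rhs_series (complex_of_real q) N n g w"
  shows "lhs_series (complex_of_real q) N n \<gamma> z = rhs_series (complex_of_real q) N n \<gamma> w"
proof -
  let ?Q = "complex_of_real q"
  define H where "H g = (\<Sum>k\<le>N.
      phi43_coeff ?Q (inverse (?Q^(2*n))) (inverse (?Q^(2*(N-n)+1))) (inverse (?Q^N)) 0 0 k
      / qpoch (- inverse (?Q^N)) ?Q k * qpoch (g*?Q*?Q^k) ?Q (2*N-k) * aw_basis ?Q (-g*?Q) k z)
    - (\<Sum>k\<le>n.
      phi43_coeff (?Q^2) (inverse (?Q^(2*n))) (inverse (?Q^(2*(N-n)+1))) (inverse (?Q^(2*N))) 0 0 k
      * qpoch (g*?Q*?Q^(2*k)) ?Q (2*N-2*k) * aw_basis (?Q^2) (g^2*?Q^2) k w)" for g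
  have cleared: "H g = qpoch (g*?Q) ?Q (2*N) * (lhs_series ?Q N n g z - rhs_series ?Q N n g w)"
    if "qpoch (g*?Q) ?Q (2*N) \<noteq> 0" for g
    unfolding H_def right_diff_distrib lhs_series_cleared[OF that]
      rhs_series_cleared[OF that \<open>n \<le> N\<close>] ..
  have "is_polyfun H"
    unfolding H_def aw_basis_def qpoch_def by (intro is_polyfun_intros)
  moreover have "H g = 0" if "Im g \<noteq> 0" for g
  proof -
    interpret quadratic_transformation q N n g
      using assms that by unfold_locales
    show ?thesis using cleared[OF qpoch_g_nonzero] agree[OF that] by simp
  qed
  ultimately have "H \<gamma> = 0" by (rule is_polyfun_eq_0_if_nonreal)
  then show ?thesis using cleared[OF nonzero] nonzero by simp
qed

theorem mainTheorem9:
  fixes q :: real and N n :: nat and \<gamma> :: complex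
  assumes "0 < q" and "q < 1" and "0 < N" and "n \<le> N"
    and "\<And>j::nat. \<gamma> * complex_of_real q \<noteq> inverse (complex_of_real q ^ j)"
    and "\<And>j::nat. \<gamma> * complex_of_real q ^ 2 \<noteq> inverse (complex_of_real q ^ j)"
  defines "Q \<equiv> complex_of_real q"
  defines "L \<equiv> (\<lambda>x::complex. phi43_term
              (inverse (Q ^ (2 * n))) (inverse (Q ^ (2 * (N - n) + 1)))
              (qpow q (- x)) (- \<gamma> * qpow q (x + 1))
              (inverse (Q ^ N)) (- inverse (Q ^ N)) (\<gamma> * Q) Q)"
  defines "R \<equiv> (\<lambda>x::complex. phi43_term
              (inverse (Q ^ (2 * n))) (inverse (Q ^ (2 * (N - n) + 1)))
              (qpow q (- 2 * x)) (\<gamma> ^ 2 * qpow q (2 * x + 2))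
              (inverse (Q ^ (2 * N))) (\<gamma> * Q) (\<gamma> * Q ^ 2) (Q ^ 2))"
  shows "(2 * n \<le> N \<longrightarrow> (\<forall>x::complex. L x = R x))
       \<and> (N < 2 * n \<longrightarrow> (\<forall>x::nat. x \<le> N \<longrightarrow> L (of_nat x) = R (of_nat x)))"
proof -
  have "qpoch (\<gamma> * Q) Q (2*N) \<noteq> 0"
  proof (rule qpoch_nonzero)
    fix j
    show "1 - \<gamma> * Q * Q^j \<noteq> 0"
      using assms(1) assms(5)[of j] unfolding Q_def by (auto simp: field_simps)
  qed
  note extend = lhs_series_eq_rhs_series_from_nonreal[OF assms(1,2,4) this[unfolded Q_def]]
  have R: "R x = rhs_series Q N n \<gamma> (qpow q (- x)^2)" for x
    unfolding R_def Q_def using assms(1) by (rule phi43_term_eq_rhs_series)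
  show ?thesis
  proof (intro conjI impI allI)
    fix x :: complex
    assume "2 * n \<le> N"
    have "L x = lhs_series Q N n \<gamma> (qpow q (- x))"
      unfolding L_def Q_def using assms(1) \<open>2 * n \<le> N\<close> by (intro phi43_term_eq_lhs_series) auto
    also have "\<dots> = rhs_series Q N n \<gamma> (qpow q (- x)^2)"
      unfolding Q_def using quadratic_transformation.lhs_series_eq_rhs_series[OF _ \<open>2 * n \<le> N\<close> qpow_nonzero]
      by (intro extend) (use assms in \<open>simp add: quadratic_transformation_def\<close>)
    finally show "L x = R x" using R by simp
  next
    fix x :: nat
    assume "x \<le> N"
    have "qpow q (- of_nat x) = inverse (Q^x)"
      unfolding Q_def using assms(1) by (simp add: qpow_minus qpow_of_nat)
    moreover have "L (of_nat x) = lhs_series Q N n \<gamma> (qpow q (- of_nat x))"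
      unfolding L_def Q_def using assms(1) \<open>x \<le> N\<close>
      by (intro phi43_term_eq_lhs_series[where K = x]) (auto simp: qpow_minus qpow_of_nat)
    moreover have "lhs_series Q N n \<gamma> (inverse (Q^x)) = rhs_series Q N n \<gamma> (inverse (Q^x)^2)"
      unfolding Q_def using quadratic_transformation.lhs_series_eq_rhs_series_on_grid[OF _ \<open>x \<le> N\<close>]
      by (intro extend) (use assms in \<open>simp add: quadratic_transformation_def\<close>)
    ultimately show "L (of_nat x) = R (of_nat x)" using R by simp
  qed
qed

end
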